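(* Let $G$ be a second countable locally compact group and $\Omega$ a homogeneous space of $G$. Let $F\subset P$ and $F\subset P'$ be closed subgroups of $G$, let $Y,Y'$ be closed subsets of $\Omega$ and let $M\subset G$. Suppose that (a) $PY=Y$ and $P'Y'=Y'$; (b) $mY\cap Y'\neq\emptyset$ for every $m\in M$; (c) $Y$ is a compact $F$-minimal subset. Then $hY\subset Y'$ for every $h\in N_G(F)\cap\overline{P'MP}$.
   Context: $N_G(F)$ denotes the normalizer of $F$ in $G$. For a closed subgroup $F\subset G$, a closed $F$-invariant subset $Y\subset\Omega$ is called $F$-minimal if it contains no proper nonempty closed $F$-invariant subset, i.e. $Fy$ is dense in $Y$ for every $y\in Y$. *)

theory Defs
  imports "HOL-Analysis.Analysis"
begin

definition topological_group ::
  "('g::topological_space \<Rightarrow> 'g \<Rightarrow> 'g) \<Rightarrow> ('g \<Rightarrow> 'g) \<Rightarrow> 'g \<Rightarrow> bool" where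
  "topological_group mul iv e \<longleftrightarrow>
     (\<forall>x y z. mul (mul x y) z = mul x (mul y z)) \<and>
     (\<forall>x. mul e x = x \<and> mul x e = x) \<and>
     (\<forall>x. mul (iv x) x = e \<and> mul x (iv x) = e) \<and>
     continuous_on UNIV (\<lambda>p. mul (fst p) (snd p)) \<and>
     continuous_on UNIV iv"

definition is_subgroup :: "('g \<Rightarrow> 'g \<Rightarrow> 'g) \<Rightarrow> ('g \<Rightarrow> 'g) \<Rightarrow> 'g \<Rightarrow> 'g set \<Rightarrow> bool" where
  "is_subgroup mul iv e H \<longleftrightarrow> e \<in> H \<and> (\<forall>x\<in>H. \<forall>y\<in>H. mul x y \<in> H) \<and> (\<forall>x\<in>H. iv x \<in> H)"

definition closed_subgroup ::
  "('g::topological_space \<Rightarrow> 'g \<Rightarrow> 'g) \<Rightarrow> ('g \<Rightarrow> 'g) \<Rightarrow> 'g \<Rightarrow> 'g set \<Rightarrow> bool" where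
  "closed_subgroup mul iv e H \<longleftrightarrow> is_subgroup mul iv e H \<and> closed H"

text \<open>A continuous action of G on the Hausdorff space 'w making it a homogeneous
  space: the action is jointly continuous and transitive, and the orbit map of a
  (hence every) point is open, so that 'w is homeomorphic to G/H with H the
  (closed) stabiliser.\<close>
definition homogeneous_space ::
  "('g::topological_space \<Rightarrow> 'g \<Rightarrow> 'g) \<Rightarrow> 'g \<Rightarrow> ('g \<Rightarrow> 'w::topological_space \<Rightarrow> 'w) \<Rightarrow> bool" where
  "homogeneous_space mul e act \<longleftrightarrow>
     (\<forall>w. act e w = w) \<and>
     (\<forall>g h w. act (mul g h) w = act g (act h w)) \<and>
     continuous_on UNIV (\<lambda>p. act (fst p) (snd p)) \<and>
     (\<forall>w v. \<exists>g. act g w = v) \<and>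
     (\<forall>w U. open U \<longrightarrow> open ((\<lambda>g. act g w) ` U))"

definition set_act :: "('g \<Rightarrow> 'w \<Rightarrow> 'w) \<Rightarrow> 'g set \<Rightarrow> 'w set \<Rightarrow> 'w set" where
  "set_act act A Y = {act g y | g y. g \<in> A \<and> y \<in> Y}"

definition invariant_set :: "('g \<Rightarrow> 'w \<Rightarrow> 'w) \<Rightarrow> 'g set \<Rightarrow> 'w set \<Rightarrow> bool" where
  "invariant_set act F Y \<longleftrightarrow> (\<forall>f\<in>F. \<forall>y\<in>Y. act f y \<in> Y)"

definition minimal_set ::
  "('g \<Rightarrow> 'w::topological_space \<Rightarrow> 'w) \<Rightarrow> 'g set \<Rightarrow> 'w set \<Rightarrow> bool" where
  "minimal_set act F Y \<longleftrightarrow> closed Y \<and> invariant_set act F Y \<and>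
     (\<forall>Z. Z \<subseteq> Y \<longrightarrow> Z \<noteq> {} \<longrightarrow> closed Z \<longrightarrow> invariant_set act F Z \<longrightarrow> Z = Y)"

definition normalizer :: "('g \<Rightarrow> 'g \<Rightarrow> 'g) \<Rightarrow> ('g \<Rightarrow> 'g) \<Rightarrow> 'g set \<Rightarrow> 'g set" where
  "normalizer mul iv F = {h. (\<lambda>f. mul (mul h f) (iv h)) ` F = F}"

definition triple_prod :: "('g \<Rightarrow> 'g \<Rightarrow> 'g) \<Rightarrow> 'g set \<Rightarrow> 'g set \<Rightarrow> 'g set \<Rightarrow> 'g set" where
  "triple_prod mul A B C = {mul (mul a b) c | a b c. a \<in> A \<and> b \<in> B \<and> c \<in> C}"

end

theory Submission
  imports Defs
begin

(* Call T = {g. gY meets Y'} the transporter of Y into Y'.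
   (1) T is closed: Y is compact and the action is jointly continuous, so the
       tube lemma shows that the complement of T is open.
   (2) P'MP lies in T: given a \<in> P', m \<in> M, p \<in> P and y \<in> Y with m y \<in> Y',
       the point p^-1 y lies in Y and (a m p) (p^-1 y) = a (m y) lies in Y'.
   Hence the closure of P'MP lies in T.
   (3) If h normalizes F and hY meets the closed F-invariant set Y', then
       Y \<inter> h^-1 Y' is a nonempty closed F-invariant subset of Y, which by
       F-minimality of Y is all of Y, i.e. hY \<subseteq> Y'.
   The theorem combines (1)-(3), with Y' being F-invariant because F \<subseteq> P'. *)

lemma set_act_singleton: "set_act act {g} Y = act g ` Y"
  unfolding set_act_def by blast

lemma set_act_invariant:
  assumes "set_act act P Y = Y" "p \<in> P" "y \<in> Y"
  shows "act p y \<in> Y"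
  using assms unfolding set_act_def by blast

lemma act_mul:
  assumes "homogeneous_space mul e act"
  shows "act (mul g k) w = act g (act k w)"
  using assms unfolding homogeneous_space_def by blast

lemma act_inverse_cancel:
  assumes G: "topological_group mul iv e" and hom: "homogeneous_space mul e act"
  shows "act g (act (iv g) w) = w" and "act (iv g) (act g w) = w"
proof -
  have "act e w = w"
    using hom unfolding homogeneous_space_def by blast
  moreover have "mul g (iv g) = e" "mul (iv g) g = e"
    using G unfolding topological_group_def by auto
  ultimately show "act g (act (iv g) w) = w" and "act (iv g) (act g w) = w"
    by (metis act_mul[OF hom])+
qed

lemma act_conjugate:
  assumes G: "topological_group mul iv e" and hom: "homogeneous_space mul e act"
  shows "act (mul (mul h f) (iv h)) (act h y) = act h (act f y)"
  by (simp add: act_mul[OF hom] act_inverse_cancel[OF G hom])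

lemma act_translation_continuous:
  assumes "continuous_on UNIV (\<lambda>p. act (fst p) (snd p))"
  shows "continuous_on UNIV (act g)"
proof -
  have "continuous_on UNIV (\<lambda>w. (g, w))"
    by (intro continuous_intros)
  from continuous_on_compose2[OF assms this] show ?thesis
    by simp
qed

definition transporter :: "('g \<Rightarrow> 'w \<Rightarrow> 'w) \<Rightarrow> 'w set \<Rightarrow> 'w set \<Rightarrow> 'g set" where
  "transporter act Y Y' = {g. \<exists>y\<in>Y. act g y \<in> Y'}"

text \<open>The
  complement is open by the tube lemma applied to \<open>{g} \<times> Y\<close> inside the open
  preimage of \<open>-Y'\<close> under the action map.\<close>
lemma closed_transporter:
  assumes cont: "continuous_on UNIV (\<lambda>p. act (fst p) (snd p))"
    and "compact Y" and "closed Y'"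
  shows "closed (transporter act Y Y')"
proof -
  define W where "W = (\<lambda>p. act (fst p) (snd p)) -` (- Y')"
  have "open W"
    unfolding W_def using open_vimage[OF _ cont] \<open>closed Y'\<close> by auto
  have "\<exists>U. open U \<and> g \<in> U \<and> U \<subseteq> - transporter act Y Y'"
    if "g \<notin> transporter act Y Y'" for g
  proof -
    have "{g} \<times> Y \<subseteq> W"
      using that unfolding transporter_def W_def by auto
    from Elementary_Topology.tube_lemma[OF \<open>compact Y\<close> \<open>open W\<close> this]
    obtain U where "g \<in> U" "open U" "U \<times> Y \<subseteq> W"
      by blast
    moreover from \<open>U \<times> Y \<subseteq> W\<close> have "U \<subseteq> - transporter act Y Y'"
      unfolding transporter_def W_def by fastforce
    ultimately show ?thesis
      by blast
  qed
  then have "open (- transporter act Y Y')"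
    by (metis ComplD open_subopen)
  then show ?thesis
    by (simp add: closed_open)
qed

text \<open>Step (2): if \<open>Y\<close> is \<open>P\<close>-invariant, \<open>Y'\<close> is \<open>P'\<close>-invariant and every \<open>mY\<close> meets
  \<open>Y'\<close>, then every product \<open>a m p\<close> with \<open>a \<in> P'\<close>, \<open>m \<in> M\<close>, \<open>p \<in> P\<close> transports \<open>Y\<close>
  into \<open>Y'\<close>, witnessed by the point \<open>p\<^sup>-\<^sup>1 y\<close>.\<close>
lemma triple_prod_subset_transporter:
  assumes G: "topological_group mul iv e" and hom: "homogeneous_space mul e act"
    and P: "is_subgroup mul iv e P"
    and PY: "set_act act P Y = Y" and PY': "set_act act P' Y' = Y'"
    and meets: "\<forall>m\<in>M. set_act act {m} Y \<inter> Y' \<noteq> {}"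
  shows "triple_prod mul P' M P \<subseteq> transporter act Y Y'"
proof
  fix g assume "g \<in> triple_prod mul P' M P"
  then obtain a m p where g: "g = mul (mul a m) p" and "a \<in> P'" "m \<in> M" "p \<in> P"
    unfolding triple_prod_def by blast
  from meets \<open>m \<in> M\<close> obtain y where "y \<in> Y" "act m y \<in> Y'"
    unfolding set_act_singleton by blast
  have "iv p \<in> P"
    using P \<open>p \<in> P\<close> unfolding is_subgroup_def by blast
  then have "act (iv p) y \<in> Y"
    using set_act_invariant[OF PY] \<open>y \<in> Y\<close> by blast
  moreover have "act g (act (iv p) y) = act a (act m y)"
    unfolding g by (simp add: act_mul[OF hom] act_inverse_cancel[OF G hom])
  moreover have "act a (act m y) \<in> Y'"
    using set_act_invariant[OF PY' \<open>a \<in> P'\<close> \<open>act m y \<in> Y'\<close>] .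
  ultimately show "g \<in> transporter act Y Y'"
    unfolding transporter_def by (auto intro!: bexI[of _ "act (iv p) y"])
qed

text \<open>Step (3): a normalizing element \<open>h\<close> that moves an \<open>F\<close>-minimal set \<open>Y\<close> into
  contact with a closed \<open>F\<close>-invariant set \<open>Y'\<close> moves all of \<open>Y\<close> into \<open>Y'\<close>: the
  set \<open>Y \<inter> h\<^sup>-\<^sup>1Y'\<close> is nonempty, closed and \<open>F\<close>-invariant because
  \<open>h f y = (h f h\<^sup>-\<^sup>1) (h y)\<close> with \<open>h f h\<^sup>-\<^sup>1 \<in> F\<close>.\<close>
lemma minimal_translate_subset:
  assumes G: "topological_group mul iv e" and hom: "homogeneous_space mul e act"
    and h: "h \<in> normalizer mul iv F"
    and min: "minimal_set act F Y"
    and "closed Y'" and FY': "invariant_set act F Y'"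
    and "h \<in> transporter act Y Y'"
  shows "act h ` Y \<subseteq> Y'"
proof -
  have "closed Y" and FY: "invariant_set act F Y"
    and least: "\<And>Z. \<lbrakk>Z \<subseteq> Y; Z \<noteq> {}; closed Z; invariant_set act F Z\<rbrakk> \<Longrightarrow> Z = Y"
    using min unfolding minimal_set_def by blast+
  define Z where "Z = Y \<inter> act h -` Y'"
  have "continuous_on UNIV (act h)"
    using hom unfolding homogeneous_space_def by (blast intro: act_translation_continuous)
  then have "closed Z"
    unfolding Z_def using \<open>closed Y\<close> \<open>closed Y'\<close> by (intro closed_Int closed_vimage)
  moreover have "Z \<noteq> {}"
    using \<open>h \<in> transporter act Y Y'\<close> unfolding Z_def transporter_def by blast
  moreover have "invariant_set act F Z"
    unfolding invariant_set_def
  proof (intro ballI)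
    fix f y assume "f \<in> F" and "y \<in> Z"
    have "mul (mul h f) (iv h) \<in> F"
      using h \<open>f \<in> F\<close> unfolding normalizer_def by blast
    then have "act (mul (mul h f) (iv h)) (act h y) \<in> Y'"
      using FY' \<open>y \<in> Z\<close> unfolding Z_def invariant_set_def by blast
    then have "act h (act f y) \<in> Y'"
      by (simp only: act_conjugate[OF G hom])
    moreover have "act f y \<in> Y"
      using FY \<open>f \<in> F\<close> \<open>y \<in> Z\<close> unfolding invariant_set_def Z_def by blast
    ultimately show "act f y \<in> Z"
      unfolding Z_def by blast
  qed
  moreover have "Z \<subseteq> Y"
    unfolding Z_def by blast
  ultimately have "Z = Y"
    using least by blast
  then show ?thesis
    unfolding Z_def by blast
qed

theorem lemma3p2:
  fixes mul :: "'g::{t2_space, second_countable_topology} \<Rightarrow> 'g \<Rightarrow> 'g"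
    and iv :: "'g \<Rightarrow> 'g" and e :: 'g
    and act :: "'g \<Rightarrow> 'w::t2_space \<Rightarrow> 'w"
    and F P P' M :: "'g set" and Y Y' :: "'w set"
  assumes G: "topological_group mul iv e"
    and lc: "locally_compact_space (euclidean :: 'g topology)"
    and hom: "homogeneous_space mul e act"
    and F: "closed_subgroup mul iv e F"
    and P: "closed_subgroup mul iv e P"
    and P': "closed_subgroup mul iv e P'"
    and FP: "F \<subseteq> P" and FP': "F \<subseteq> P'"
    and Yc: "closed Y" and Y'c: "closed Y'"
    and a1: "set_act act P Y = Y" and a2: "set_act act P' Y' = Y'"
    and b: "\<forall>m\<in>M. set_act act {m} Y \<inter> Y' \<noteq> {}"
    and c1: "compact Y" and c2: "minimal_set act F Y"
  shows "\<forall>h \<in> normalizer mul iv F \<inter> closure (triple_prod mul P' M P).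
           set_act act {h} Y \<subseteq> Y'"
proof
  fix h assume h: "h \<in> normalizer mul iv F \<inter> closure (triple_prod mul P' M P)"
  have "continuous_on UNIV (\<lambda>p. act (fst p) (snd p))"
    using hom unfolding homogeneous_space_def by blast
  then have "closed (transporter act Y Y')"
    using c1 Y'c by (rule closed_transporter)
  moreover have "is_subgroup mul iv e P"
    using P unfolding closed_subgroup_def by blast
  ultimately have "closure (triple_prod mul P' M P) \<subseteq> transporter act Y Y'"
    by (intro closure_minimal triple_prod_subset_transporter[OF G hom _ a1 a2 b])
  moreover have "invariant_set act F Y'"
    using set_act_invariant[OF a2] FP' unfolding invariant_set_def by blast
  ultimately have "act h ` Y \<subseteq> Y'"
    using h minimal_translate_subset[OF G hom _ c2 Y'c] by blast
  then show "set_act act {h} Y \<subseteq> Y'"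
    unfolding set_act_singleton .
qed

end
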